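(* Let $\delta,\alpha\geq0$, $\theta\in\left[\frac\alpha2,\alpha\right]$, $\varepsilon\in(0,1)$, and $$\lambda_\pm=\frac{|\xi|^{2\theta}}{2(1+|\xi|^{2\delta})}\left(-1\pm i\sqrt{4|\xi|^{2(\alpha-2\theta)}(1+|\xi|^{2\delta})-1}\right).$$ If $|\xi|<\varepsilon$ then: (i) $|\lambda_+-\lambda_-|\approx|\xi|^\alpha$; (ii) $|\lambda_\pm|^2\lesssim|\xi|^{2\alpha}$; (iii) $|e^{\lambda_\pm t}|\lesssim e^{-\frac14|\xi|^{2\theta}t}$ for $t\geq0$.
   Context: $f\lesssim g$ means $0\leq f\leq Cg$ with $C>0$ independent of $\xi$ and $t$; $g\approx f$ means $g\lesssim f$ and $f\lesssim g$. *)

theory Defs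
  imports "HOL-Analysis.Analysis"
begin

definition lam :: "real \<Rightarrow> real \<Rightarrow> real \<Rightarrow> real \<Rightarrow> 'a::real_normed_vector \<Rightarrow> complex" where
  "lam s \<delta> \<alpha> \<theta> \<xi> =
     complex_of_real (norm \<xi> powr (2*\<theta>) / (2 * (1 + norm \<xi> powr (2*\<delta>)))) *
     (-1 + complex_of_real s * \<i> *
        complex_of_real (sqrt (4 * norm \<xi> powr (2*(\<alpha> - 2*\<theta>)) * (1 + norm \<xi> powr (2*\<delta>)) - 1)))"

end

theory Submission
  imports Defs
begin

text \<open>Write \<open>r = |\<xi>|\<close>, \<open>p = r\<^bsup>2\<theta>\<^esup>\<close>, \<open>b = 1 + r\<^bsup>2\<delta>\<^esup>\<close>, \<open>m = r\<^bsup>2(\<alpha>-2\<theta>)\<^esup>\<close> and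
  \<open>A = r\<^sup>\<alpha>\<close>, so that \<open>p\<^sup>2 m = A\<^sup>2\<close>, \<open>1 \<le> b \<le> 2\<close>, \<open>m \<ge> 1\<close> and \<open>p \<le> A\<close> for \<open>r < 1\<close>.
  Then \<open>\<lambda>\<^sub>\<plusminus>\<close> are the two complex conjugate roots of \<open>b \<lambda>\<^sup>2 + p \<lambda> + p\<^sup>2 m = 0\<close>. Their real
  part \<open>-p/(2b)\<close> is at most \<open>-p/4\<close>; their modulus squared is the product of the roots,
  \<open>A\<^sup>2/b \<le> A\<^sup>2\<close>; and the square of their gap is \<open>(4A\<^sup>2b - p\<^sup>2)/b\<^sup>2\<close>, which lies between
  \<open>A\<^sup>2/4\<close> and \<open>4A\<^sup>2\<close>. So \<open>C = 2\<close> serves for all three estimates.\<close>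

definition underdamped_root :: "real \<Rightarrow> real \<Rightarrow> real \<Rightarrow> real \<Rightarrow> complex" where
  "underdamped_root s b p m =
     complex_of_real (p / (2*b)) * (-1 + complex_of_real s * \<i> * complex_of_real (sqrt (4*m*b - 1)))"

lemma lam_eq_underdamped_root:
  "lam s \<delta> \<alpha> \<theta> \<xi> =
     underdamped_root s (1 + norm \<xi> powr (2*\<delta>)) (norm \<xi> powr (2*\<theta>)) (norm \<xi> powr (2*(\<alpha> - 2*\<theta>)))"
  by (simp add: lam_def underdamped_root_def mult_ac)

lemma underdamped_root_eq_Complex:
  "underdamped_root s b p m = Complex (- p / (2*b)) (s * p * sqrt (4*m*b - 1) / (2*b))"
  by (simp add: underdamped_root_def complex_eq_iff)

lemma norm_underdamped_root_diff:
  assumes "0 \<le> p" "0 < b" "1 \<le> 4*m*b"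
  shows "norm (underdamped_root 1 b p m - underdamped_root (-1) b p m) = p * sqrt (4*m*b - 1) / b"
proof -
  have "underdamped_root 1 b p m - underdamped_root (-1) b p m
      = complex_of_real (p * sqrt (4*m*b - 1) / b) * \<i>"
    by (simp add: underdamped_root_eq_Complex complex_eq_iff)
  then show ?thesis
    using assms by (simp only: norm_mult norm_of_real norm_ii) simp
qed

lemma norm_underdamped_root_sq:
  assumes "s\<^sup>2 = 1" "1 \<le> 4*m*b" "0 < b"
  shows "(norm (underdamped_root s b p m))\<^sup>2 = p\<^sup>2 * m / b"
proof -
  have "(norm (underdamped_root s b p m))\<^sup>2 = (p / (2*b))\<^sup>2 * (1 + s\<^sup>2 * (sqrt (4*m*b - 1))\<^sup>2)"
    by (simp add: underdamped_root_eq_Complex cmod_power2 power_mult_distrib power_divide algebra_simps)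
  also have "\<dots> = p\<^sup>2 * m / b"
    using assms by (simp add: power2_eq_square field_simps)
  finally show ?thesis .
qed

lemma underdamped_gap_bounds:
  fixes p b m A :: real
  assumes "0 \<le> p" "p \<le> A" "p\<^sup>2 * m = A\<^sup>2" "1 \<le> b" "b \<le> 2" "1 \<le> m"
  shows "p * sqrt (4*m*b - 1) / b \<le> 2*A" "A \<le> 2 * (p * sqrt (4*m*b - 1) / b)"
proof -
  define g where "g = p * sqrt (4*m*b - 1) / b"
  have "1 \<le> m * b"
    using assms(4,6) mult_mono[of 1 m 1 b] by simp
  then have "g\<^sup>2 * b\<^sup>2 = p\<^sup>2 * (4*m*b - 1)"
    using assms(4) by (simp add: g_def power_mult_distrib power_divide)
  also have "\<dots> = 4 * (A\<^sup>2 * b) - p\<^sup>2"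
    using assms(3) by (simp add: algebra_simps flip: assms(3))
  finally have gb: "g\<^sup>2 * b\<^sup>2 = 4 * (A\<^sup>2 * b) - p\<^sup>2" .
  have "0 \<le> g" "0 \<le> A"
    using \<open>1 \<le> m * b\<close> assms(1,2,4) by (auto simp: g_def)
  have "p\<^sup>2 \<le> A\<^sup>2"
    using assms(1,2) by (simp add: power_mono)
  have "0 \<le> A\<^sup>2 * b"
    using assms(4) by simp
  from mult_left_mono[OF assms(4) this] mult_left_mono[OF assms(5) this]
    mult_left_mono[OF assms(4), of "A\<^sup>2"]
  have Ab: "A\<^sup>2 \<le> A\<^sup>2 * b" "A\<^sup>2 * b \<le> A\<^sup>2 * b\<^sup>2" "A\<^sup>2 * b\<^sup>2 \<le> 2 * (A\<^sup>2 * b)"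
    by (simp_all add: power2_eq_square mult_ac)
  have "g\<^sup>2 * b\<^sup>2 \<le> 4 * (A\<^sup>2 * b\<^sup>2)"
    unfolding gb using Ab(2) zero_le_power2[of p] by linarith
  moreover have "A\<^sup>2 * b\<^sup>2 \<le> 4 * (g\<^sup>2 * b\<^sup>2)"
    unfolding gb using Ab(1,3) \<open>p\<^sup>2 \<le> A\<^sup>2\<close> zero_le_power2[of A] by (smt (verit))
  ultimately have "g\<^sup>2 * b\<^sup>2 \<le> (2*A)\<^sup>2 * b\<^sup>2" "(A/2)\<^sup>2 * b\<^sup>2 \<le> g\<^sup>2 * b\<^sup>2"
    by (simp_all add: power_mult_distrib power_divide)
  moreover have "0 < b\<^sup>2"
    using assms(4) by simp
  ultimately have "g\<^sup>2 \<le> (2*A)\<^sup>2" "(A/2)\<^sup>2 \<le> g\<^sup>2"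
    using mult_right_le_imp_le by blast+
  with \<open>0 \<le> g\<close> \<open>0 \<le> A\<close> have "g \<le> 2*A" "A/2 \<le> g"
    by (auto intro: power2_le_imp_le)
  then show "g \<le> 2*A" "A \<le> 2*g"
    by simp_all
qed

lemma norm_underdamped_root_diff_bounds:
  assumes "0 \<le> p" "p \<le> A" "p\<^sup>2 * m = A\<^sup>2" "1 \<le> b" "b \<le> 2" "1 \<le> m"
  shows "norm (underdamped_root 1 b p m - underdamped_root (-1) b p m) \<le> 2*A"
    and "A \<le> 2 * norm (underdamped_root 1 b p m - underdamped_root (-1) b p m)"
  using underdamped_gap_bounds[OF assms] assms(1,4,6) mult_mono[of 1 m 1 b]
  by (simp_all add: norm_underdamped_root_diff)

lemma norm_underdamped_root_sq_le:
  assumes "s\<^sup>2 = 1" "1 \<le> b" "1 \<le> m" "p\<^sup>2 * m = A\<^sup>2"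
  shows "(norm (underdamped_root s b p m))\<^sup>2 \<le> A\<^sup>2"
proof -
  have "(norm (underdamped_root s b p m))\<^sup>2 = A\<^sup>2 / b"
    using assms mult_mono[of 1 m 1 b] by (simp add: norm_underdamped_root_sq)
  also have "\<dots> \<le> A\<^sup>2 / 1"
    using assms(2) by (intro divide_left_mono) auto
  finally show ?thesis
    by simp
qed

lemma Re_underdamped_root_le:
  assumes "0 \<le> p" "0 < b" "b \<le> 2"
  shows "Re (underdamped_root s b p m) \<le> - (p/4)"
  using assms mult_left_mono[OF assms(3,1)] by (simp add: underdamped_root_eq_Complex field_simps)

lemma norm_exp_mult_of_real_le:
  fixes z :: complex
  assumes "Re z \<le> -a" "0 \<le> t"
  shows "norm (exp (z * complex_of_real t)) \<le> exp (-a * t)"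
  using mult_right_mono[OF assms] by (simp add: norm_exp_eq_Re)

lemma powr_bounds_below_one:
  fixes r \<delta> \<alpha> \<theta> :: real
  assumes "0 \<le> \<delta>" "\<alpha>/2 \<le> \<theta>" "\<theta> \<le> \<alpha>" "0 < r" "r < 1"
  shows "r powr (2*\<theta>) \<le> r powr \<alpha>" "r powr (2*\<delta>) \<le> 1" "1 \<le> r powr (2*(\<alpha> - 2*\<theta>))"
    and "(r powr (2*\<theta>))\<^sup>2 * r powr (2*(\<alpha> - 2*\<theta>)) = (r powr \<alpha>)\<^sup>2"
proof -
  show "r powr (2*\<theta>) \<le> r powr \<alpha>"
    using assms by (intro powr_mono') auto
  show "r powr (2*\<delta>) \<le> 1"
    using assms by (simp add: powr_le1)
  show "1 \<le> r powr (2*(\<alpha> - 2*\<theta>))"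
    using assms powr_mono'[of "2*(\<alpha> - 2*\<theta>)" 0 r] by simp
  show "(r powr (2*\<theta>))\<^sup>2 * r powr (2*(\<alpha> - 2*\<theta>)) = (r powr \<alpha>)\<^sup>2"
    by (simp add: power2_eq_square flip: powr_add)
qed

theorem lemma2p5:
  fixes \<delta> \<alpha> \<theta> \<epsilon> :: real
  assumes "\<delta> \<ge> 0" and "\<alpha> \<ge> 0" and "\<alpha>/2 \<le> \<theta>" and "\<theta> \<le> \<alpha>"
    and "0 < \<epsilon>" and "\<epsilon> < 1"
  shows "\<exists>C>0. \<forall>\<xi>::'a::euclidean_space. 0 < norm \<xi> \<and> norm \<xi> < \<epsilon> \<longrightarrow>
     (norm (lam 1 \<delta> \<alpha> \<theta> \<xi> - lam (-1) \<delta> \<alpha> \<theta> \<xi>) \<le> C * norm \<xi> powr \<alpha> \<and>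
      norm \<xi> powr \<alpha> \<le> C * norm (lam 1 \<delta> \<alpha> \<theta> \<xi> - lam (-1) \<delta> \<alpha> \<theta> \<xi>)) \<and>
     (\<forall>s\<in>{1, -1}. (norm (lam s \<delta> \<alpha> \<theta> \<xi>))^2 \<le> C * norm \<xi> powr (2*\<alpha>)) \<and>
     (\<forall>s\<in>{1, -1}. \<forall>t::real. t \<ge> 0 \<longrightarrow>
        norm (exp (lam s \<delta> \<alpha> \<theta> \<xi> * complex_of_real t)) \<le> C * exp (- (1/4) * norm \<xi> powr (2*\<theta>) * t))"
proof (intro exI[of _ 2] conjI allI impI ballI)
  fix \<xi> :: 'a
  assume "0 < norm \<xi> \<and> norm \<xi> < \<epsilon>"
  then have r: "0 < norm \<xi>" "norm \<xi> < 1"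
    using assms(6) by auto
  define p b m A where "p = norm \<xi> powr (2*\<theta>)" and "b = 1 + norm \<xi> powr (2*\<delta>)"
    and "m = norm \<xi> powr (2*(\<alpha> - 2*\<theta>))" and "A = norm \<xi> powr \<alpha>"
  have lam: "lam s \<delta> \<alpha> \<theta> \<xi> = underdamped_root s b p m" for s
    by (simp add: lam_eq_underdamped_root p_def b_def m_def)
  have pA: "0 \<le> p" "p \<le> A" "p\<^sup>2 * m = A\<^sup>2" and bm: "1 \<le> b" "b \<le> 2" "1 \<le> m"
    using powr_bounds_below_one[OF assms(1,3,4) r] by (auto simp: p_def b_def m_def A_def)
  show "norm (lam 1 \<delta> \<alpha> \<theta> \<xi> - lam (-1) \<delta> \<alpha> \<theta> \<xi>) \<le> 2 * norm \<xi> powr \<alpha>"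
      "norm \<xi> powr \<alpha> \<le> 2 * norm (lam 1 \<delta> \<alpha> \<theta> \<xi> - lam (-1) \<delta> \<alpha> \<theta> \<xi>)"
    using norm_underdamped_root_diff_bounds[OF pA bm] by (simp_all add: lam A_def)
  fix s :: real
  assume "s \<in> {1, -1}"
  then have "(norm (lam s \<delta> \<alpha> \<theta> \<xi>))\<^sup>2 \<le> A\<^sup>2"
    using norm_underdamped_root_sq_le[OF _ bm(1,3) pA(3)] by (auto simp: lam)
  moreover have "A\<^sup>2 = norm \<xi> powr (2*\<alpha>)"
    by (simp add: A_def power2_eq_square flip: powr_add)
  ultimately show "(norm (lam s \<delta> \<alpha> \<theta> \<xi>))\<^sup>2 \<le> 2 * norm \<xi> powr (2*\<alpha>)"
    using powr_ge_zero[of "norm \<xi>" "2*\<alpha>"] by linarith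
  show "norm (exp (lam s \<delta> \<alpha> \<theta> \<xi> * complex_of_real t)) \<le> 2 * exp (- (1/4) * norm \<xi> powr (2*\<theta>) * t)"
    if "0 \<le> t" for t
  proof -
    have "norm (exp (lam s \<delta> \<alpha> \<theta> \<xi> * complex_of_real t)) \<le> exp (- (p/4) * t)"
      unfolding lam using Re_underdamped_root_le[OF pA(1) _ bm(2)] bm(1) that
      by (intro norm_exp_mult_of_real_le) auto
    also have "\<dots> \<le> 2 * exp (- (1/4) * norm \<xi> powr (2*\<theta>) * t)"
      by (simp add: p_def)
    finally show ?thesis .
  qed
qed simp

end
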